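(* Let $\mathbf{L}=\mathbf{b}+\mathbb{N}(\mathbf{F})\subseteq\mathbb{N}^n$ be a linear set ($\mathbf{F}$ finite) and $\mathbf{X}\subseteq\mathbf{L}$. Then the following are equivalent: (a) for every $\mathbf{x}\in\mathbf{L}$ and every $\mathbf{w}\in\mathbb{N}_{\ge1}(\mathbf{F})$ there is $N\in\mathbb{N}$ with $\mathbf{x}+\mathbb{N}_{\ge N}\mathbf{w}\subseteq\mathbf{X}$; (b) for every $\mathbf{x}\in\mathbf{L}$ and every $\mathbf{w}\in\mathrm{int}(\mathbf{L})-\mathbf{b}=\mathrm{int}(\mathbb{N}(\mathbf{F}))$ there is $N\in\mathbb{N}$ with $\mathbf{x}+\mathbb{N}_{\ge N}\mathbf{w}\subseteq\mathbf{X}$. In particular, whether $\mathbf{X}\trianglelefteq\mathbf{L}$ holds does not depend on the chosen representation of $\mathbf{L}$.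
   Context: $\mathbb{N}_{\ge1}(\mathbf{F})=\{\sum_{\mathbf{f}\in\mathbf{F}}\lambda_{\mathbf{f}}\mathbf{f}\mid\lambda_{\mathbf{f}}\in\mathbb{N},\lambda_{\mathbf{f}}\ge1\}$. For an $\mathbb{N}$-generated set $\mathbf{P}$ (closed under addition, containing $\mathbf{0}$), a vector $\mathbf{v}\in\mathbf{P}$ is interior if for every $\mathbf{x}\in\mathbf{P}$ there is $m\in\mathbb{N}$ with $m\mathbf{v}-\mathbf{x}\in\mathbf{P}$; $\mathrm{int}(\mathbf{P})$ is the set of interior vectors. For a linear set $\mathbf{L}=\mathbf{b}+\mathbb{N}(\mathbf{F})\subseteq\mathbb{N}^n$ ($\mathbf{b}$ is its unique minimal element), $\mathrm{int}(\mathbf{L})=\mathbf{b}+\mathrm{int}(\mathbf{L}-\mathbf{b})$. $\mathbf{X}\trianglelefteq\mathbf{L}$ is defined by condition (a). *)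

theory Defs
  imports Main
begin

text \<open>Vectors of \<open>\<nat>\<^sup>n\<close> are functions \<open>'n \<Rightarrow> nat\<close> with a finite index type \<open>'n\<close>
  (so n = CARD('n)); addition and scaling are pointwise.\<close>

definition vadd :: "('n \<Rightarrow> nat) \<Rightarrow> ('n \<Rightarrow> nat) \<Rightarrow> ('n \<Rightarrow> nat)" where
  "vadd x y = (\<lambda>i. x i + y i)"

definition vsmul :: "nat \<Rightarrow> ('n \<Rightarrow> nat) \<Rightarrow> ('n \<Rightarrow> nat)" where
  "vsmul m x = (\<lambda>i. m * x i)"

definition Ncomb :: "('n \<Rightarrow> nat) set \<Rightarrow> ('n \<Rightarrow> nat) set" where
  "Ncomb F = {v. \<exists>lam :: ('n \<Rightarrow> nat) \<Rightarrow> nat. v = (\<lambda>i. \<Sum>f\<in>F. lam f * f i)}"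

definition Ncomb_ge1 :: "('n \<Rightarrow> nat) set \<Rightarrow> ('n \<Rightarrow> nat) set" where
  "Ncomb_ge1 F = {v. \<exists>lam :: ('n \<Rightarrow> nat) \<Rightarrow> nat. (\<forall>f\<in>F. lam f \<ge> 1) \<and> v = (\<lambda>i. \<Sum>f\<in>F. lam f * f i)}"

definition linset :: "('n \<Rightarrow> nat) \<Rightarrow> ('n \<Rightarrow> nat) set \<Rightarrow> ('n \<Rightarrow> nat) set" where
  "linset b F = {vadd b v | v. v \<in> Ncomb F}"

text \<open>Interior vectors of an \<open>\<nat>\<close>-generated set P: \<open>v \<in> P\<close> such that for every \<open>x \<in> P\<close>
  there is m with \<open>m v - x \<in> P\<close>, i.e. \<open>m v = x + p\<close> for some \<open>p \<in> P\<close>.\<close>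
definition intr :: "('n \<Rightarrow> nat) set \<Rightarrow> ('n \<Rightarrow> nat) set" where
  "intr P = {v \<in> P. \<forall>x\<in>P. \<exists>m::nat. \<exists>p\<in>P. vsmul m v = vadd x p}"

definition trileq :: "('n \<Rightarrow> nat) set \<Rightarrow> ('n \<Rightarrow> nat) \<Rightarrow> ('n \<Rightarrow> nat) set \<Rightarrow> bool" where
  "trileq X b F \<longleftrightarrow> (\<forall>x\<in>linset b F. \<forall>w\<in>Ncomb_ge1 F.
      \<exists>N::nat. \<forall>k\<ge>N. vadd x (vsmul k w) \<in> X)"

end

theory Submission
  imports Defs
begin

text \<open>Every \<open>w \<in> \<nat>\<^sub>\<ge>\<^sub>1(F)\<close> is interior: \<open>x = \<Sum> \<mu>\<^sub>f f\<close> is dominated by \<open>m w\<close> once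
  \<open>m \<ge> \<Sum> \<mu>\<^sub>f\<close>. Conversely, for interior \<open>w\<close> some \<open>m w\<close> dominates \<open>\<Sum>\<^sub>f f\<close>, so a multiple of \<open>w\<close>
  lies in \<open>\<nat>\<^sub>\<ge>\<^sub>1(F)\<close>; splitting \<open>k = r + q m\<close> with \<open>r < m\<close> and applying (a) to the finitely
  many base points \<open>x + r w\<close> yields (b). Independence of the representation holds because
  \<open>b\<close> is the componentwise minimum of \<open>L\<close> and \<open>\<nat>(F) = L - b\<close>.\<close>

lemma vadd_assoc: "vadd (vadd x y) z = vadd x (vadd y z)"
  by (simp add: vadd_def add.assoc)

lemma vadd_zero_right: "vadd x (\<lambda>i. 0) = x"
  by (simp add: vadd_def)

lemma vadd_left_cancel: "vadd b u = vadd b v \<longleftrightarrow> u = v"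
  by (simp add: vadd_def fun_eq_iff)

lemma vsmul_vsmul: "vsmul k (vsmul m w) = vsmul (k * m) w"
  by (simp add: vsmul_def mult.assoc)

lemma vsmul_add: "vsmul (r + q) w = vadd (vsmul r w) (vsmul q w)"
  by (simp add: vsmul_def vadd_def algebra_simps)

lemma Ncomb_I: "v = (\<lambda>i. \<Sum>f\<in>F. lam f * f i) \<Longrightarrow> v \<in> Ncomb F"
  unfolding Ncomb_def by blast

lemma Ncomb_E:
  assumes "v \<in> Ncomb F"
  obtains lam where "v = (\<lambda>i. \<Sum>f\<in>F. lam f * f i)"
  using assms unfolding Ncomb_def by blast

lemma Ncomb_zero: "(\<lambda>i. 0) \<in> Ncomb F"
  by (rule Ncomb_I[where lam = "\<lambda>_. 0"]) simp

lemma Ncomb_add: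
  assumes "u \<in> Ncomb F" "v \<in> Ncomb F"
  shows "vadd u v \<in> Ncomb F"
proof -
  obtain a c where "u = (\<lambda>i. \<Sum>f\<in>F. a f * f i)" "v = (\<lambda>i. \<Sum>f\<in>F. c f * f i)"
    using assms unfolding Ncomb_def by blast
  then have "vadd u v = (\<lambda>i. \<Sum>f\<in>F. (a f + c f) * f i)"
    by (simp add: vadd_def sum.distrib algebra_simps)
  then show ?thesis by (rule Ncomb_I)
qed

lemma Ncomb_smul:
  assumes "u \<in> Ncomb F"
  shows "vsmul k u \<in> Ncomb F"
proof -
  obtain a where "u = (\<lambda>i. \<Sum>f\<in>F. a f * f i)"
    using assms by (rule Ncomb_E)
  then have "vsmul k u = (\<lambda>i. \<Sum>f\<in>F. (k * a f) * f i)"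
    by (simp add: vsmul_def sum_distrib_left algebra_simps)
  then show ?thesis by (rule Ncomb_I)
qed

lemma intr_imp_Ncomb: "w \<in> intr (Ncomb F) \<Longrightarrow> w \<in> Ncomb F"
  unfolding intr_def by blast

lemma vadd_sum_generators_Ncomb_ge1:
  assumes "p \<in> Ncomb F"
  shows "vadd (\<lambda>i. \<Sum>f\<in>F. f i) p \<in> Ncomb_ge1 F"
proof -
  obtain c where "p = (\<lambda>i. \<Sum>f\<in>F. c f * f i)"
    using assms by (rule Ncomb_E)
  then have "vadd (\<lambda>i. \<Sum>f\<in>F. f i) p = (\<lambda>i. \<Sum>f\<in>F. (1 + c f) * f i)"
    by (simp add: vadd_def sum.distrib algebra_simps)
  then show ?thesis unfolding Ncomb_ge1_def by force
qed

lemma Ncomb_ge1_subset_intr: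
  assumes "finite F"
  shows "Ncomb_ge1 F \<subseteq> intr (Ncomb F)"
proof
  fix w assume "w \<in> Ncomb_ge1 F"
  then obtain l where l_ge1: "\<forall>f\<in>F. l f \<ge> 1" and w: "w = (\<lambda>i. \<Sum>f\<in>F. l f * f i)"
    unfolding Ncomb_ge1_def by blast
  have "\<exists>m. \<exists>p\<in>Ncomb F. vsmul m w = vadd x p" if "x \<in> Ncomb F" for x
  proof -
    obtain mu where x: "x = (\<lambda>i. \<Sum>f\<in>F. mu f * f i)"
      using \<open>x \<in> Ncomb F\<close> by (rule Ncomb_E)
    define m where "m = (\<Sum>f\<in>F. mu f)"
    have mu_le: "mu f \<le> m * l f" if "f \<in> F" for f
    proof -
      have "mu f \<le> m"
        unfolding m_def using member_le_sum[of f F mu] assms that by simp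
      also have "\<dots> \<le> m * l f"
        using l_ge1 that by simp
      finally show ?thesis .
    qed
    define p where "p = (\<lambda>i. \<Sum>f\<in>F. (m * l f - mu f) * f i)"
    have "vsmul m w = vadd x p"
    proof
      fix i
      have "m * (\<Sum>f\<in>F. l f * f i) = (\<Sum>f\<in>F. (mu f + (m * l f - mu f)) * f i)"
        by (simp add: sum_distrib_left mult.assoc mu_le cong: sum.cong)
      also have "\<dots> = (\<Sum>f\<in>F. mu f * f i) + (\<Sum>f\<in>F. (m * l f - mu f) * f i)"
        by (simp add: sum.distrib algebra_simps)
      finally show "vsmul m w i = vadd x p i"
        by (simp add: vsmul_def vadd_def w x p_def)
    qed
    moreover have "p \<in> Ncomb F"
      unfolding p_def by (rule Ncomb_I) simp
    ultimately show ?thesis by blast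
  qed
  moreover have "w \<in> Ncomb F"
    using w by (rule Ncomb_I)
  ultimately show "w \<in> intr (Ncomb F)"
    unfolding intr_def by blast
qed

lemma intr_Ncomb_multiple_in_Ncomb_ge1:
  assumes "w \<in> intr (Ncomb F)"
  obtains m where "m \<ge> 1" "vsmul m w \<in> Ncomb_ge1 F"
proof -
  have "(\<lambda>i. \<Sum>f\<in>F. f i) \<in> Ncomb F"
    by (rule Ncomb_I[where lam = "\<lambda>_. 1"]) simp
  then obtain m p where p: "p \<in> Ncomb F" and mw: "vsmul m w = vadd (\<lambda>i. \<Sum>f\<in>F. f i) p"
    using assms unfolding intr_def by blast
  have "vsmul (m + 1) w = vadd (vsmul m w) w"
    by (simp add: vsmul_def vadd_def add.commute)
  then have "vsmul (m + 1) w = vadd (\<lambda>i. \<Sum>f\<in>F. f i) (vadd p w)"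
    by (simp add: mw vadd_assoc)
  moreover have "vadd p w \<in> Ncomb F"
    using p intr_imp_Ncomb[OF assms] by (rule Ncomb_add)
  ultimately have "vsmul (m + 1) w \<in> Ncomb_ge1 F"
    using vadd_sum_generators_Ncomb_ge1 by metis
  then show ?thesis using that[of "m + 1"] by simp
qed

lemma linset_add:
  assumes "x \<in> linset b F" "p \<in> Ncomb F"
  shows "vadd x p \<in> linset b F"
proof -
  obtain v where "v \<in> Ncomb F" "x = vadd b v"
    using assms(1) unfolding linset_def by blast
  then show ?thesis
    using Ncomb_add[OF _ assms(2)] unfolding linset_def by (auto simp: vadd_assoc)
qed

lemma linset_base: "b \<in> linset b F"
  using Ncomb_zero unfolding linset_def by (force simp: vadd_zero_right)

lemma linset_ge_base: "y \<in> linset b F \<Longrightarrow> b i \<le> y i"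
  unfolding linset_def vadd_def by auto

lemma linset_eq_imp_base_eq:
  assumes "linset b' F' = linset b F"
  shows "b' = b"
proof
  fix i
  show "b' i = b i"
    using linset_ge_base[where b = b and F = F] linset_ge_base[where b = b' and F = F'] linset_base[of b F]
      linset_base[of b' F'] assms by (metis le_antisym)
qed

lemma linset_eq_imp_Ncomb_eq:
  assumes "linset b F' = linset b F"
  shows "Ncomb F' = Ncomb F"
proof -
  have "v \<in> Ncomb G'" if "v \<in> Ncomb G" and "linset b G = linset b G'" for v G G'
  proof -
    have "vadd b v \<in> linset b G'"
      using that unfolding linset_def by blast
    then show ?thesis
      unfolding linset_def by (auto simp: vadd_left_cancel)
  qed
  then show ?thesis
    using assms by blast
qed

lemma eventually_from_residues:
  fixes P :: "nat \<Rightarrow> bool"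
  assumes "m \<ge> 1" and "\<And>r. r < m \<Longrightarrow> \<exists>N. \<forall>q\<ge>N. P (r + q * m)"
  shows "\<exists>N. \<forall>k\<ge>N. P k"
proof -
  obtain N where N: "\<And>r q. r < m \<Longrightarrow> q \<ge> N r \<Longrightarrow> P (r + q * m)"
    using assms(2) by metis
  define M where "M = Max (N ` {..<m})"
  have "P k" if "k \<ge> m * M" for k
  proof -
    have "M \<le> k div m"
      using that assms(1) by (simp add: less_eq_div_iff_mult_less_eq mult.commute)
    moreover have "N (k mod m) \<le> M"
      unfolding M_def using assms(1) by (intro Max_ge) auto
    ultimately have "P (k mod m + k div m * m)"
      using assms(1) by (intro N) auto
    then show ?thesis by simp
  qed
  then show ?thesis by blast
qed

lemma trileq_iff_interior:
  assumes "finite F"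
  shows "trileq X b F \<longleftrightarrow>
           (\<forall>x\<in>linset b F. \<forall>w\<in>intr (Ncomb F). \<exists>N::nat. \<forall>k\<ge>N. vadd x (vsmul k w) \<in> X)"
proof
  assume "\<forall>x\<in>linset b F. \<forall>w\<in>intr (Ncomb F). \<exists>N::nat. \<forall>k\<ge>N. vadd x (vsmul k w) \<in> X"
  then show "trileq X b F"
    unfolding trileq_def using Ncomb_ge1_subset_intr[OF assms] by blast
next
  assume a: "trileq X b F"
  show "\<forall>x\<in>linset b F. \<forall>w\<in>intr (Ncomb F). \<exists>N::nat. \<forall>k\<ge>N. vadd x (vsmul k w) \<in> X"
  proof (intro ballI)
    fix x w assume x: "x \<in> linset b F" and w: "w \<in> intr (Ncomb F)"
    obtain m where m: "m \<ge> 1" and mw: "vsmul m w \<in> Ncomb_ge1 F"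
      using w by (rule intr_Ncomb_multiple_in_Ncomb_ge1)
    from m show "\<exists>N. \<forall>k\<ge>N. vadd x (vsmul k w) \<in> X"
    proof (rule eventually_from_residues[where P = "\<lambda>k. vadd x (vsmul k w) \<in> X"])
      fix r
      have "vadd x (vsmul r w) \<in> linset b F"
        using x Ncomb_smul[OF intr_imp_Ncomb[OF w]] by (rule linset_add)
      then obtain N where "\<forall>q\<ge>N. vadd (vadd x (vsmul r w)) (vsmul q (vsmul m w)) \<in> X"
        using a mw unfolding trileq_def by blast
      then show "\<exists>N. \<forall>q\<ge>N. vadd x (vsmul (r + q * m) w) \<in> X"
        by (auto simp: vsmul_add vsmul_vsmul vadd_assoc)
    qed
  qed
qed

theorem mainTheorem11:
  fixes b :: "'n::finite \<Rightarrow> nat" and F :: "('n \<Rightarrow> nat) set" and X :: "('n \<Rightarrow> nat) set"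
  assumes "finite F" and "X \<subseteq> linset b F"
  shows "(trileq X b F \<longleftrightarrow>
           (\<forall>x\<in>linset b F. \<forall>w\<in>intr (Ncomb F).
              \<exists>N::nat. \<forall>k\<ge>N. vadd x (vsmul k w) \<in> X))
       \<and> (\<forall>b' F'. finite F' \<and> linset b' F' = linset b F \<longrightarrow> (trileq X b' F' \<longleftrightarrow> trileq X b F))"
proof (intro conjI allI impI)
  show "trileq X b F \<longleftrightarrow>
          (\<forall>x\<in>linset b F. \<forall>w\<in>intr (Ncomb F). \<exists>N::nat. \<forall>k\<ge>N. vadd x (vsmul k w) \<in> X)"
    using assms(1) by (rule trileq_iff_interior)
next
  fix b' F' assume F': "finite F' \<and> linset b' F' = linset b F"
  then have "b' = b" by (blast intro: linset_eq_imp_base_eq)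
  with F' have eq: "linset b F' = linset b F" by simp
  then have "Ncomb F' = Ncomb F" by (rule linset_eq_imp_Ncomb_eq)
  with F' show "trileq X b' F' \<longleftrightarrow> trileq X b F"
    by (simp only: \<open>b' = b\<close> eq trileq_iff_interior[OF assms(1)] trileq_iff_interior)
qed

end
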